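(* Let $\pi_E$ be a deterministic expert policy in a finite MDP whose induced chain $P_E$ is irreducible and aperiodic, with stationary state-action distribution $\rho^E$ and mixing time $\tau_{\mathrm{mix}}$. Generate an expert trajectory $s_1,a_1,\dots,s_N,a_N$, let $D$ be the set of state-action pairs it visits, and define $R_{\mathrm{int}}(s,a)=\mathbb{1}\{(s,a)\in D\}$. Then for every $\epsilon>0$, with probability at least $1-2\exp\!\big(-\frac{\epsilon^2N}{4.5\,\tau_{\mathrm{mix}}}\big)$ the dataset is such that $\mathbb{E}_{\rho^E}[R_{\mathrm{int}}]\ge 1-\epsilon-\sqrt{8|S|\tau_{\mathrm{mix}}/N}$, and consequently any policy $\pi_I$ (inducing an irreducible aperiodic chain, with stationary state-action distribution $\rho^I$) that maximizes the expected per-step intrinsic reward, in the sense that $\mathbb{E}_{\rho^I}[R_{\mathrm{int}}]\ge\mathbb{E}_{\rho^E}[R_{\mathrm{int}}]$, satisfies $$\mathbb{E}_{\rho^I}[R_{\mathrm{int}}]\;\ge\;1-\epsilon-\sqrt{\frac{8|S|\tau_{\mathrm{mix}}}{N}}.$$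
   Context: A policy $\pi$ in a finite MDP (states $S$, actions $A$, kernel $T$) induces the chain $P_\pi(s,s')=\sum_a\pi(a\mid s)T(s'\mid s,a)$; if irreducible and aperiodic it has stationary distribution $\rho^\pi_S$ and stationary state-action distribution $\rho^\pi(s,a)=\rho^\pi_S(s)\pi(a\mid s)$; $\mathbb{E}_{\rho^\pi}[R]=\sum_{s,a}\rho^\pi(s,a)R(s,a)$. Here $P_E=P_{\pi_E}$, $\rho^E=\rho^{\pi_E}$, $\rho^E_S=\rho^{\pi_E}_S$, $\rho^I=\rho^{\pi_I}$. The mixing time $\tau_{\mathrm{mix}}$ is the smallest integer $t\ge0$ with $\max_{s'}\|\mathbb{1}(s')^\top P_E^t-\rho^E_S\|_{\mathrm{TV}}\le\tfrac14$, where $\|\rho_1-\rho_2\|_{\mathrm{TV}}=\sup_{M}|\rho_1(M)-\rho_2(M)|$. The trajectory is generated by running $\pi_E$ in the MDP. *)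

theory Defs
  imports Complex_Main
begin

definition mdp_kernel :: "('s::finite \<Rightarrow> 'a::finite \<Rightarrow> 's \<Rightarrow> real) \<Rightarrow> bool" where
  "mdp_kernel T \<longleftrightarrow> (\<forall>s a s'. 0 \<le> T s a s') \<and> (\<forall>s a. (\<Sum>s'\<in>UNIV. T s a s') = 1)"

definition is_policy :: "('s::finite \<Rightarrow> 'a::finite \<Rightarrow> real) \<Rightarrow> bool" where
  "is_policy pol \<longleftrightarrow> (\<forall>s a. 0 \<le> pol s a) \<and> (\<forall>s. (\<Sum>a\<in>UNIV. pol s a) = 1)"

definition det_policy :: "('s \<Rightarrow> 'a) \<Rightarrow> 's \<Rightarrow> 'a \<Rightarrow> real" where
  "det_policy d s a = (if a = d s then 1 else 0)"

definition induced_chain ::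
  "('s::finite \<Rightarrow> 'a::finite \<Rightarrow> 's \<Rightarrow> real) \<Rightarrow> ('s \<Rightarrow> 'a \<Rightarrow> real) \<Rightarrow> 's \<Rightarrow> 's \<Rightarrow> real" where
  "induced_chain T pol s s' = (\<Sum>a\<in>UNIV. pol s a * T s a s')"

fun matpow :: "('s::finite \<Rightarrow> 's \<Rightarrow> real) \<Rightarrow> nat \<Rightarrow> 's \<Rightarrow> 's \<Rightarrow> real" where
  "matpow P 0 s s' = (if s = s' then 1 else 0)"
| "matpow P (Suc n) s s' = (\<Sum>u\<in>UNIV. matpow P n s u * P u s')"

definition irreducible_chain :: "('s::finite \<Rightarrow> 's \<Rightarrow> real) \<Rightarrow> bool" where
  "irreducible_chain P \<longleftrightarrow> (\<forall>s s'. \<exists>n. matpow P n s s' > 0)"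

definition period :: "('s::finite \<Rightarrow> 's \<Rightarrow> real) \<Rightarrow> 's \<Rightarrow> nat" where
  "period P s = Gcd {n. n \<ge> 1 \<and> matpow P n s s > 0}"

definition aperiodic_chain :: "('s::finite \<Rightarrow> 's \<Rightarrow> real) \<Rightarrow> bool" where
  "aperiodic_chain P \<longleftrightarrow> (\<forall>s. period P s = 1)"

definition stationary_dist :: "('s::finite \<Rightarrow> 's \<Rightarrow> real) \<Rightarrow> ('s \<Rightarrow> real) \<Rightarrow> bool" where
  "stationary_dist P \<rho> \<longleftrightarrow> (\<forall>s. 0 \<le> \<rho> s) \<and> (\<Sum>s\<in>UNIV. \<rho> s) = 1 \<and>
     (\<forall>s'. \<rho> s' = (\<Sum>s\<in>UNIV. \<rho> s * P s s'))"

definition sa_dist :: "('s \<Rightarrow> real) \<Rightarrow> ('s \<Rightarrow> 'a \<Rightarrow> real) \<Rightarrow> 's \<times> 'a \<Rightarrow> real" where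
  "sa_dist \<rho>S pol = (\<lambda>(s,a). \<rho>S s * pol s a)"

definition expect_sa :: "('s::finite \<times> 'a::finite \<Rightarrow> real) \<Rightarrow> ('s \<times> 'a \<Rightarrow> real) \<Rightarrow> real" where
  "expect_sa \<rho> R = (\<Sum>sa\<in>UNIV. \<rho> sa * R sa)"

definition tv_dist :: "('s::finite \<Rightarrow> real) \<Rightarrow> ('s \<Rightarrow> real) \<Rightarrow> real" where
  "tv_dist p q = (SUP M\<in>(UNIV :: 's set set). \<bar>(\<Sum>x\<in>M. p x) - (\<Sum>x\<in>M. q x)\<bar>)"

definition mixing_time :: "('s::finite \<Rightarrow> 's \<Rightarrow> real) \<Rightarrow> ('s \<Rightarrow> real) \<Rightarrow> nat" where
  "mixing_time P \<rho> = (LEAST t. \<forall>s'. tv_dist (matpow P t s') \<rho> \<le> 1/4)"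

definition path_prob :: "('s \<Rightarrow> real) \<Rightarrow> ('s \<Rightarrow> 's \<Rightarrow> real) \<Rightarrow> 's list \<Rightarrow> real" where
  "path_prob mu P xs = (case xs of [] \<Rightarrow> 1
      | x # _ \<Rightarrow> mu x * (\<Prod>i<length xs - 1. P (xs ! i) (xs ! Suc i)))"

definition traj_prob :: "('s::finite \<Rightarrow> real) \<Rightarrow> ('s \<Rightarrow> 's \<Rightarrow> real) \<Rightarrow> nat \<Rightarrow> ('s list \<Rightarrow> bool) \<Rightarrow> real" where
  "traj_prob mu P N E = (\<Sum>xs\<in>{xs. length xs = N \<and> E xs}. path_prob mu P xs)"

text \<open>Dataset of visited state-action pairs of the expert trajectory (a_i = pi_E(s_i)),
  and the intrinsic reward R_int(s,a) = 1{(s,a) in D}.\<close>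
definition dataset :: "('s \<Rightarrow> 'a) \<Rightarrow> 's list \<Rightarrow> ('s \<times> 'a) set" where
  "dataset piE xs = {(s, piE s) | s. s \<in> set xs}"

definition R_int :: "('s \<times> 'a) set \<Rightarrow> 's \<times> 'a \<Rightarrow> real" where
  "R_int D sa = (if sa \<in> D then 1 else 0)"

end

theory Submission
  imports Defs
begin

text \<open>Fix a set A of states with stationary mass \<rho>(A) > x. After l mixing times the
  chain started anywhere lies in A with probability at least \<rho>(A) - 2^-l \<ge> x/2, because
  the oscillation of t-step transition probabilities halves every \<tau> steps. Hence a
  trajectory of length N avoids A with probability at most (1 - x/2)^m, m = (N - 1) div l\<tau>,
  and a union bound over the at most 2^|S| such sets bounds the probability that the
  states never visited carry stationary mass more than x = \<epsilon> + sqrt(8|S|\<tau>/N). For a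
  deterministic expert this unvisited mass is exactly 1 - E_\<rho>E[R_int], and a policy
  doing at least as well on R_int inherits the bound.\<close>

subsection \<open>Stochastic matrices and their powers\<close>

definition stochastic :: "('s::finite \<Rightarrow> 's \<Rightarrow> real) \<Rightarrow> bool" where
  "stochastic P \<longleftrightarrow> (\<forall>s s'. 0 \<le> P s s') \<and> (\<forall>s. (\<Sum>s'\<in>UNIV. P s s') = 1)"

lemma stochastic_nonneg: "stochastic P \<Longrightarrow> 0 \<le> P s s'"
  and stochastic_row_sum: "stochastic P \<Longrightarrow> (\<Sum>s'\<in>UNIV. P s s') = 1"
  by (auto simp: stochastic_def)

lemma matpow_nonneg: "stochastic P \<Longrightarrow> 0 \<le> matpow P n s s'"
  by (induction n arbitrary: s') (auto intro!: sum_nonneg simp: stochastic_nonneg)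

lemma matpow_row_sum: "stochastic P \<Longrightarrow> (\<Sum>s'\<in>UNIV. matpow P n s s') = 1"
proof (induction n)
  case (Suc n)
  have "(\<Sum>s'\<in>UNIV. matpow P (Suc n) s s') = (\<Sum>u\<in>UNIV. matpow P n s u * (\<Sum>s'\<in>UNIV. P u s'))"
    by (simp only: matpow.simps sum_distrib_left, rule sum.swap)
  then show ?case using Suc by (simp add: stochastic_row_sum)
qed simp

lemma matpow_add: "matpow P (m + n) s s' = (\<Sum>u\<in>UNIV. matpow P m s u * matpow P n u s')"
proof (induction n arbitrary: s')
  case 0
  then show ?case by (simp add: if_distrib cong: if_cong)
next
  case (Suc n)
  have "matpow P (m + Suc n) s s' = (\<Sum>v\<in>UNIV. (\<Sum>u\<in>UNIV. matpow P m s u * matpow P n u v) * P v s')"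
    using Suc by simp
  also have "\<dots> = (\<Sum>u\<in>UNIV. matpow P m s u * (\<Sum>v\<in>UNIV. matpow P n u v * P v s'))"
    by (simp only: sum_distrib_left sum_distrib_right mult.assoc, rule sum.swap)
  finally show ?case by simp
qed

lemma matpow_1: "matpow P 1 s s' = P s s'"
proof -
  have "(\<Sum>u\<in>UNIV. (if s = u then 1 else 0) * P u s') = (\<Sum>u\<in>UNIV. if s = u then P u s' else 0)"
    by (rule sum.cong) auto
  then show ?thesis by simp
qed

lemma matpow_Suc_left: "matpow P (Suc n) s s' = (\<Sum>u\<in>UNIV. P s u * matpow P n u s')"
  using matpow_add[of P 1 n s s'] by (simp only: matpow_1 plus_1_eq_Suc)

lemma matpow_mult_le_matpow_add:
  "stochastic P \<Longrightarrow> matpow P m s u * matpow P n u s' \<le> matpow P (m + n) s s'"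
  unfolding matpow_add
  by (rule member_le_sum[where f = "\<lambda>u. matpow P m s u * matpow P n u s'"])
     (auto intro: mult_nonneg_nonneg matpow_nonneg)

lemma stationary_dist_matpow:
  assumes "stationary_dist P \<rho>"
  shows "(\<Sum>y\<in>UNIV. \<rho> y * matpow P n y z) = \<rho> z"
proof (induction n arbitrary: z)
  case 0
  have "(\<Sum>y\<in>UNIV. \<rho> y * matpow P 0 y z) = (\<Sum>y\<in>UNIV. if y = z then \<rho> y else 0)"
    by (rule sum.cong) auto
  then show ?case by simp
next
  case (Suc n)
  have "(\<Sum>y\<in>UNIV. \<rho> y * matpow P (Suc n) y z) = (\<Sum>u\<in>UNIV. (\<Sum>y\<in>UNIV. \<rho> y * matpow P n y u) * P u z)"
    by (simp only: matpow.simps sum_distrib_left sum_distrib_right mult.assoc, rule sum.swap)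
  also have "\<dots> = (\<Sum>u\<in>UNIV. \<rho> u * P u z)" using Suc by simp
  also have "\<dots> = \<rho> z" using assms unfolding stationary_dist_def by metis
  finally show ?case .
qed

definition trans_prob :: "('s::finite \<Rightarrow> 's \<Rightarrow> real) \<Rightarrow> nat \<Rightarrow> 's \<Rightarrow> 's set \<Rightarrow> real" where
  "trans_prob P t y A = (\<Sum>z\<in>A. matpow P t y z)"

lemma trans_prob_0: "trans_prob P 0 y A = (if y \<in> A then 1 else 0)"
  by (simp add: trans_prob_def sum.delta)

lemma trans_prob_add: "trans_prob P (L + t) y A = (\<Sum>w\<in>UNIV. matpow P L y w * trans_prob P t w A)"
  unfolding trans_prob_def matpow_add sum_distrib_left by (rule sum.swap)

lemma trans_prob_le_1: "stochastic P \<Longrightarrow> trans_prob P t y A \<le> 1"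
  unfolding trans_prob_def
  using sum_mono2[of UNIV A "matpow P t y"] matpow_row_sum[of P t y] matpow_nonneg[of P]
  by auto

lemma stationary_dist_trans_prob:
  "stationary_dist P \<rho> \<Longrightarrow> (\<Sum>y\<in>UNIV. \<rho> y * trans_prob P t y A) = (\<Sum>z\<in>A. \<rho> z)"
  unfolding trans_prob_def sum_distrib_left
  by (subst sum.swap) (simp add: stationary_dist_matpow)

lemma sum_le_tv_dist: "\<bar>(\<Sum>x\<in>B. p x) - (\<Sum>x\<in>B. q x)\<bar> \<le> tv_dist p q"
  unfolding tv_dist_def by (rule cSUP_upper) (auto intro: bdd_above_finite)

subsection \<open>Contraction of oscillation\<close>

text \<open>The elementary step behind Dobrushin's contraction coefficient: subtracting
  min h, only the states where the first row exceeds the second contribute.\<close>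
lemma weighted_sum_diff_le:
  fixes Q :: "'s::finite \<Rightarrow> 's \<Rightarrow> real"
  assumes rows: "(\<Sum>w\<in>UNIV. Q x w) = 1" "(\<Sum>w\<in>UNIV. Q x' w) = 1"
    and mass_diff: "\<And>B. (\<Sum>w\<in>B. Q x w) - (\<Sum>w\<in>B. Q x' w) \<le> c"
    and osc: "\<And>w w'. h w - h w' \<le> D"
  shows "(\<Sum>w\<in>UNIV. Q x w * h w) - (\<Sum>w\<in>UNIV. Q x' w * h w) \<le> c * D"
proof -
  define lo where "lo = Min (range h)"
  have "lo \<in> range h" unfolding lo_def by (rule Min_in) auto
  then obtain w0 where w0: "h w0 = lo" by auto
  have lo_le: "lo \<le> h w" for w
    unfolding lo_def by (rule Min_le) auto
  have D_nonneg: "0 \<le> D" using osc[of w0 w0] by simp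
  define g where "g w = Q x w - Q x' w" for w
  define B where "B = {w. g w > 0}"
  have "(\<Sum>w\<in>UNIV. g w) = 0" using rows by (simp add: g_def sum_subtractf)
  then have "(\<Sum>w\<in>UNIV. Q x w * h w) - (\<Sum>w\<in>UNIV. Q x' w * h w) = (\<Sum>w\<in>UNIV. g w * (h w - lo))"
    by (simp add: g_def sum_subtractf left_diff_distrib right_diff_distrib
        sum_distrib_right[symmetric])
  also have "\<dots> \<le> (\<Sum>w\<in>UNIV. if w \<in> B then g w * D else 0)"
  proof (rule sum_mono)
    fix w
    show "g w * (h w - lo) \<le> (if w \<in> B then g w * D else 0)"
      using osc[of w w0] lo_le[of w] w0
      by (auto simp: B_def mult_left_mono mult_nonpos_nonneg)
  qed
  also have "\<dots> = (\<Sum>w\<in>B. g w) * D"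
    by (simp add: sum.If_cases sum_distrib_right)
  also have "(\<Sum>w\<in>B. g w) = (\<Sum>w\<in>B. Q x w) - (\<Sum>w\<in>B. Q x' w)"
    by (simp add: g_def sum_subtractf)
  also have "\<dots> * D \<le> c * D"
    using mass_diff D_nonneg by (simp add: mult_right_mono)
  finally show ?thesis .
qed

lemma trans_prob_oscillation_power:
  assumes "stochastic P"
    and mass_diff: "\<And>x x' B. trans_prob P L x B - trans_prob P L x' B \<le> c"
  shows "trans_prob P (k * L) y A - trans_prob P (k * L) y' A \<le> c ^ k"
proof (induction k arbitrary: y y')
  case 0
  then show ?case by (simp add: trans_prob_0)
next
  case (Suc k)
  have "trans_prob P (Suc k * L) y A - trans_prob P (Suc k * L) y' A
      = (\<Sum>w\<in>UNIV. matpow P L y w * trans_prob P (k * L) w A)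
        - (\<Sum>w\<in>UNIV. matpow P L y' w * trans_prob P (k * L) w A)"
    by (simp add: trans_prob_add[symmetric] add.commute)
  also have "\<dots> \<le> c * c ^ k"
    using Suc assms mass_diff matpow_row_sum
    by (intro weighted_sum_diff_le[where Q = "matpow P L"]) (auto simp: trans_prob_def)
  finally show ?case by simp
qed

lemma convex_combination_diff_le:
  fixes \<rho> f :: "'s::finite \<Rightarrow> real"
  assumes nonneg: "\<And>y. 0 \<le> \<rho> y" and total: "(\<Sum>y\<in>UNIV. \<rho> y) = 1"
    and osc: "\<And>y y'. f y - f y' \<le> e"
  shows "\<bar>f x - (\<Sum>y\<in>UNIV. \<rho> y * f y)\<bar> \<le> e"
proof -
  have const: "(\<Sum>y\<in>UNIV. \<rho> y * c) = c" for c
    using total by (simp add: sum_distrib_right[symmetric])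
  have "(\<Sum>y\<in>UNIV. \<rho> y * (f y - f x)) \<le> (\<Sum>y\<in>UNIV. \<rho> y * e)"
    and "(\<Sum>y\<in>UNIV. \<rho> y * (f x - f y)) \<le> (\<Sum>y\<in>UNIV. \<rho> y * e)"
    by (intro sum_mono mult_left_mono osc nonneg)+
  then show ?thesis
    by (simp add: const right_diff_distrib sum_subtractf abs_le_iff)
qed

lemma trans_prob_stationary_diff_le:
  assumes "stationary_dist P \<rho>" and "\<And>y y'. trans_prob P t y A - trans_prob P t y' A \<le> e"
  shows "\<bar>trans_prob P t x A - (\<Sum>z\<in>A. \<rho> z)\<bar> \<le> e"
proof -
  have "\<And>y. 0 \<le> \<rho> y" "(\<Sum>y\<in>UNIV. \<rho> y) = 1"
    using assms(1) unfolding stationary_dist_def by blast+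
  from convex_combination_diff_le[OF this, of "\<lambda>y. trans_prob P t y A", OF assms(2)]
  show ?thesis
    unfolding stationary_dist_trans_prob[OF assms(1)] .
qed

subsection \<open>Primitivity and existence of the mixing time\<close>

lemma least_pos_dvd_add_subgroup_int:
  fixes I :: "int set"
  assumes add: "\<And>x y. x \<in> I \<Longrightarrow> y \<in> I \<Longrightarrow> x + y \<in> I"
    and neg: "\<And>x. x \<in> I \<Longrightarrow> - x \<in> I"
    and d: "d \<in> I" "0 < d" and least: "\<And>e. e \<in> I \<Longrightarrow> 0 < e \<Longrightarrow> d \<le> e"
    and x: "x \<in> I"
  shows "d dvd x"
proof -
  have "0 \<in> I" using add[OF d(1) neg[OF d(1)]] by simp
  then have nat_mult: "int k * d \<in> I" for k
    by (induction k) (auto simp: distrib_right intro: add d(1))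
  have "- (x div d) * d \<in> I"
  proof (cases "x div d \<ge> 0")
    case True
    then show ?thesis using neg[OF nat_mult[of "nat (x div d)"]] by simp
  next
    case False
    then show ?thesis using nat_mult[of "nat (- (x div d))"] by simp
  qed
  then have "x mod d \<in> I"
    using add[OF x] by (metis minus_div_mult_eq_mod add_uminus_conv_diff mult_minus_left)
  moreover have "0 \<le> x mod d" "x mod d < d" using d(2) by auto
  ultimately have "x mod d = 0"
    using least[of "x mod d"] by fastforce
  then show ?thesis by (simp add: dvd_eq_mod_eq_0)
qed

text \<open>Differences of elements of insert 0 S form a subgroup of the integers;
  its least positive element divides every element of S, hence is 1.\<close>
lemma add_closed_Gcd_1_consecutive:
  fixes S :: "nat set"
  assumes closed: "\<And>a b. a \<in> S \<Longrightarrow> b \<in> S \<Longrightarrow> a + b \<in> S" and gcd: "Gcd S = 1"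
  shows "\<exists>q. q \<in> insert 0 S \<and> q + 1 \<in> insert 0 S"
proof -
  define S0 where "S0 = insert 0 S"
  have closed0: "a + b \<in> S0" if "a \<in> S0" "b \<in> S0" for a b
    using that closed by (auto simp: S0_def)
  define I where "I = {int p - int q | p q. p \<in> S0 \<and> q \<in> S0}"
  have I_add: "x + y \<in> I" if "x \<in> I" "y \<in> I" for x y
  proof -
    from that obtain p q p' q' where "x = int p - int q" "y = int p' - int q'"
      "p \<in> S0" "q \<in> S0" "p' \<in> S0" "q' \<in> S0" by (auto simp: I_def)
    then show ?thesis unfolding I_def
      by (intro CollectI exI[of _ "p + p'"] exI[of _ "q + q'"]) (auto intro: closed0)
  qed
  have I_neg: "- x \<in> I" if "x \<in> I" for x
    using that unfolding I_def by force
  have S_I: "int s \<in> I" if "s \<in> S" for s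
    using that unfolding I_def S0_def by force
  have "\<not> S \<subseteq> {0}" using gcd Gcd_0_iff[of S] by auto
  then obtain a where "a \<in> S" "a > 0" by auto
  define d where "d = (LEAST d. d > 0 \<and> int d \<in> I)"
  have d: "d > 0 \<and> int d \<in> I"
    unfolding d_def by (rule LeastI[of _ a]) (use \<open>a \<in> S\<close> \<open>a > 0\<close> S_I in auto)
  have least: "int d \<le> e" if "e \<in> I" "0 < e" for e
    using Least_le[of "\<lambda>d. d > 0 \<and> int d \<in> I" "nat e"] that unfolding d_def by simp
  have "d dvd s" if "s \<in> S" for s
    using least_pos_dvd_add_subgroup_int[OF I_add I_neg, of "int d" "int s"] d least S_I[OF that]
    by simp
  then have "d = 1" using gcd by (metis Gcd_greatest nat_dvd_1_iff_1)
  then obtain p q where pq: "1 = int p - int q" "p \<in> S0" "q \<in> S0"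
    using d unfolding I_def by auto
  then have "p = q + 1" by linarith
  then show ?thesis using pq unfolding S0_def by blast
qed

lemma add_closed_Gcd_1_eventually:
  fixes S :: "nat set"
  assumes closed: "\<And>a b. a \<in> S \<Longrightarrow> b \<in> S \<Longrightarrow> a + b \<in> S" and gcd: "Gcd S = 1"
  shows "\<exists>M. \<forall>n\<ge>M. n \<in> S"
proof -
  define S0 where "S0 = insert 0 S"
  have closed0: "a + b \<in> S0" if "a \<in> S0" "b \<in> S0" for a b
    using that closed by (auto simp: S0_def)
  have mult: "k * x \<in> S0" if "x \<in> S0" for k x
  proof (induction k)
    case (Suc k)
    then show ?case using closed0[OF that Suc] by simp
  qed (simp add: S0_def)
  obtain q where q: "q \<in> S0" "q + 1 \<in> S0"
    using add_closed_Gcd_1_consecutive[OF closed gcd] unfolding S0_def by blast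
  text \<open>Every n \<ge> q^2 is a combination of q and q + 1 with nonnegative coefficients:
    n = (n div q - n mod q) q + (n mod q)(q + 1).\<close>
  have "n \<in> S" if n: "n \<ge> max 1 (q * q)" for n
  proof (cases "q = 0")
    case True
    then show ?thesis using mult[OF q(2), of n] n by (simp add: S0_def)
  next
    case False
    define k r where "k = n div q" and "r = n mod q"
    have "r < q" using False by (simp add: r_def)
    moreover have "q \<le> k" unfolding k_def using n False
      by (metis max.bounded_iff div_le_mono nonzero_mult_div_cancel_right)
    ultimately have "n = (k - r) * q + r * (q + 1)"
      by (simp add: k_def r_def algebra_simps diff_mult_distrib)
    moreover have "(k - r) * q + r * (q + 1) \<in> S0"
      using closed0 mult q by blast
    ultimately show ?thesis using n by (auto simp: S0_def)
  qed
  then show ?thesis by blast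
qed

lemma irreducible_aperiodic_matpow_pos:
  assumes st: "stochastic P" and irr: "irreducible_chain P" and ap: "aperiodic_chain P"
  shows "\<exists>M. \<forall>s s'. matpow P M s s' > 0"
proof -
  define R where "R s = {n. n \<ge> 1 \<and> matpow P n s s > 0}" for s
  have "\<exists>M. \<forall>n\<ge>M. n \<in> R s" for s
  proof (rule add_closed_Gcd_1_eventually)
    fix a b assume "a \<in> R s" "b \<in> R s"
    then show "a + b \<in> R s"
      using matpow_mult_le_matpow_add[OF st, of a s s b s] unfolding R_def
      by (auto intro: order.strict_trans2[OF mult_pos_pos])
  qed (use ap in \<open>simp add: R_def aperiodic_chain_def period_def\<close>)
  then obtain Ms where Ms: "\<And>s n. n \<ge> Ms s \<Longrightarrow> n \<in> R s" by metis
  obtain k where k: "\<And>s s'. matpow P (k s s') s s' > 0"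
    using irr unfolding irreducible_chain_def by metis
  define M where "M = (\<Sum>s\<in>UNIV. Ms s) + (\<Sum>s\<in>UNIV. \<Sum>s'\<in>UNIV. k s s')"
  have "matpow P M s s' > 0" for s s'
  proof -
    have "Ms s \<le> (\<Sum>s\<in>UNIV. Ms s)" "k s s' \<le> (\<Sum>s\<in>UNIV. \<Sum>s'\<in>UNIV. k s s')"
      using member_le_sum[of s' UNIV "k s"] member_le_sum[of s UNIV "\<lambda>s. \<Sum>s'\<in>UNIV. k s s'"]
        member_le_sum[of s UNIV Ms] by auto
    then have "M - k s s' \<ge> Ms s" and M: "M = (M - k s s') + k s s'"
      unfolding M_def by linarith+
    then have "0 < matpow P (M - k s s') s s * matpow P (k s s') s s'"
      using Ms k unfolding R_def by simp
    also have "\<dots> \<le> matpow P M s s'"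
      by (subst M) (rule matpow_mult_le_matpow_add[OF st])
    finally show ?thesis .
  qed
  then show ?thesis by blast
qed

lemma trans_prob_diff_le_if_matpow_ge:
  assumes st: "stochastic P" and lower: "\<And>s s'. \<alpha> \<le> matpow P M s s'"
  shows "trans_prob P M x B - trans_prob P M x' B \<le> 1 - \<alpha>"
proof (cases "B = UNIV")
  case True
  then show ?thesis
    using lower[of x x] trans_prob_le_1[OF st, of M x "{x}"] matpow_row_sum[OF st]
    by (simp add: trans_prob_def)
next
  case False
  then obtain w where w: "w \<notin> B" by auto
  have "trans_prob P M x (insert w B) \<le> 1" by (rule trans_prob_le_1[OF st])
  moreover have "0 \<le> trans_prob P M x' B"
    unfolding trans_prob_def by (rule sum_nonneg) (simp add: matpow_nonneg[OF st])
  ultimately show ?thesis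
    using w lower[of x w] by (simp add: trans_prob_def)
qed

lemma mixing_time_tv_dist_le:
  assumes st: "stochastic P" and "irreducible_chain P" "aperiodic_chain P"
    and sd: "stationary_dist P \<rho>"
  shows "tv_dist (matpow P (mixing_time P \<rho>) s) \<rho> \<le> 1/4"
proof -
  obtain M where M: "\<And>s s'. matpow P M s s' > 0"
    using irreducible_aperiodic_matpow_pos[OF assms(1-3)] by blast
  define \<alpha> where "\<alpha> = Min (range (\<lambda>(s, s'). matpow P M s s'))"
  have "\<alpha> \<in> range (\<lambda>(s, s'). matpow P M s s')" unfolding \<alpha>_def by (rule Min_in) auto
  then have "\<alpha> > 0" using M by auto
  have lower: "\<alpha> \<le> matpow P M s s'" for s s'
    unfolding \<alpha>_def by (rule Min_le) (auto intro: image_eqI[of _ _ "(s, s')"])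
  obtain k where k: "(1 - \<alpha>) ^ k < 1/4"
    using real_arch_pow_inv[of "1/4" "1 - \<alpha>"] \<open>\<alpha> > 0\<close> by auto
  have "tv_dist (matpow P (k * M) s') \<rho> \<le> 1/4" for s'
    unfolding tv_dist_def
  proof (rule cSUP_least)
    fix A
    have "\<bar>trans_prob P (k * M) s' A - (\<Sum>z\<in>A. \<rho> z)\<bar> \<le> (1 - \<alpha>) ^ k"
      using trans_prob_diff_le_if_matpow_ge[OF st lower]
      by (intro trans_prob_stationary_diff_le[OF sd] trans_prob_oscillation_power[OF st]) auto
    then show "\<bar>(\<Sum>x\<in>A. matpow P (k * M) s' x) - (\<Sum>x\<in>A. \<rho> x)\<bar> \<le> 1/4"
      using k by (simp add: trans_prob_def)
  qed auto
  then have "\<exists>t. \<forall>s'. tv_dist (matpow P t s') \<rho> \<le> 1/4" by blast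
  then have "\<forall>s'. tv_dist (matpow P (mixing_time P \<rho>) s') \<rho> \<le> 1/4"
    unfolding mixing_time_def by (rule LeastI_ex)
  then show ?thesis by blast
qed

subsection \<open>Trajectory probabilities\<close>

fun path_weight :: "('s \<Rightarrow> 's \<Rightarrow> real) \<Rightarrow> 's list \<Rightarrow> real" where
  "path_weight P [] = 1"
| "path_weight P [x] = 1"
| "path_weight P (x # y # ys) = P x y * path_weight P (y # ys)"

lemma prod_eq_path_weight:
  "(\<Prod>i<length xs. P ((x # xs) ! i) ((x # xs) ! Suc i)) = path_weight P (x # xs)"
proof (induction xs arbitrary: x)
  case (Cons y ys)
  have "(\<Prod>i<length (y # ys). P ((x # y # ys) ! i) ((x # y # ys) ! Suc i))
      = P x y * (\<Prod>i<length ys. P ((y # ys) ! i) ((y # ys) ! Suc i))"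
    by (simp only: length_Cons prod.lessThan_Suc_shift) simp
  then show ?case using Cons by simp
qed simp

lemma path_prob_Cons: "path_prob mu P (x # xs) = mu x * path_weight P (x # xs)"
  by (simp only: path_prob_def list.case length_Cons diff_Suc_1 prod_eq_path_weight)

lemma path_prob_nonneg: "stochastic P \<Longrightarrow> (\<And>s. 0 \<le> mu s) \<Longrightarrow> 0 \<le> path_prob mu P xs"
proof (cases xs)
  case (Cons x xs')
  assume "stochastic P" "\<And>s. 0 \<le> mu s"
  moreover from \<open>stochastic P\<close> have "0 \<le> path_weight P ys" for ys
    by (induction P ys rule: path_weight.induct) (auto simp: stochastic_nonneg)
  ultimately show ?thesis unfolding Cons path_prob_Cons by simp
qed (simp add: path_prob_def)

lemma traj_prob_eq_sum_if:
  "traj_prob mu P N E = (\<Sum>xs\<in>{xs. length xs = N}. if E xs then path_prob mu P xs else 0)"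
proof -
  have "{xs. length xs = N \<and> E xs} = {xs \<in> {xs. length xs = N}. E xs}" by auto
  then show ?thesis
    unfolding traj_prob_def
    using sum.inter_filter[OF finite_lists_length_eq[OF finite_UNIV]] by simp
qed

lemma traj_prob_nonneg: "stochastic P \<Longrightarrow> (\<And>s. 0 \<le> mu s) \<Longrightarrow> 0 \<le> traj_prob mu P N E"
  unfolding traj_prob_def by (rule sum_nonneg) (simp add: path_prob_nonneg)

lemma traj_prob_mono:
  assumes "stochastic P" "\<And>s. 0 \<le> mu s" and "\<And>xs. E xs \<Longrightarrow> F xs"
  shows "traj_prob mu P N E \<le> traj_prob mu P N F"
  unfolding traj_prob_eq_sum_if using assms
  by (intro sum_mono) (auto simp: path_prob_nonneg)

lemma traj_prob_not:
  "traj_prob mu P N (\<lambda>xs. \<not> E xs) = traj_prob mu P N (\<lambda>xs. True) - traj_prob mu P N E"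
  unfolding traj_prob_eq_sum_if sum_subtractf[symmetric] by (rule sum.cong) auto

lemma traj_prob_union_bound:
  assumes "stochastic P" "\<And>s. 0 \<le> mu s" and "finite \<A>"
    and cover: "\<And>xs. length xs = N \<Longrightarrow> F xs \<Longrightarrow> \<exists>A\<in>\<A>. E A xs"
  shows "traj_prob mu P N F \<le> (\<Sum>A\<in>\<A>. traj_prob mu P N (E A))"
proof -
  have "traj_prob mu P N F
      \<le> (\<Sum>xs\<in>{xs. length xs = N}. \<Sum>A\<in>\<A>. if E A xs then path_prob mu P xs else 0)"
    unfolding traj_prob_eq_sum_if
  proof (rule sum_mono)
    fix xs :: "'a list" assume "xs \<in> {xs. length xs = N}"
    then show "(if F xs then path_prob mu P xs else 0)
        \<le> (\<Sum>A\<in>\<A>. if E A xs then path_prob mu P xs else 0)"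
      using cover[of xs] assms(1-3) member_le_sum[of _ \<A> "\<lambda>A. if E A xs then path_prob mu P xs else 0"]
      by (force intro: sum_nonneg simp: path_prob_nonneg)
  qed
  also have "\<dots> = (\<Sum>A\<in>\<A>. traj_prob mu P N (E A))"
    unfolding traj_prob_eq_sum_if by (rule sum.swap)
  finally show ?thesis .
qed

fun avoid_prob :: "('s::finite \<Rightarrow> 's \<Rightarrow> real) \<Rightarrow> 's set \<Rightarrow> nat \<Rightarrow> 's \<Rightarrow> real" where
  "avoid_prob P A 0 y = (if y \<in> A then 0 else 1)"
| "avoid_prob P A (Suc n) y = (if y \<in> A then 0 else (\<Sum>z\<in>UNIV. P y z * avoid_prob P A n z))"

lemma sum_lists_length_Suc:
  "(\<Sum>xs\<in>{xs :: 's::finite list. length xs = Suc n}. g xs)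
    = (\<Sum>z\<in>UNIV. \<Sum>zs\<in>{xs. length xs = n}. g (z # zs))"
proof -
  have eq: "{xs :: 's list. length xs = Suc n} = (\<lambda>(z, zs). z # zs) ` (UNIV \<times> {xs. length xs = n})"
    by (auto simp: length_Suc_conv image_def)
  have inj: "inj_on (\<lambda>(z :: 's, zs). z # zs) (UNIV \<times> {xs. length xs = n})"
    by (auto simp: inj_on_def)
  show ?thesis
    unfolding eq sum.reindex[OF inj] sum.cartesian_product by (simp add: case_prod_beta')
qed

lemma sum_avoiding_paths:
  "(\<Sum>ys\<in>{ys. length ys = n}. if set (y # ys) \<inter> A = {} then path_weight P (y # ys) else 0)
    = avoid_prob P A n y"
proof (induction n arbitrary: y)
  case 0
  have "{ys :: 'a list. length ys = 0} = {[]}" by auto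
  then show ?case by simp
next
  case (Suc n)
  show ?case
  proof (cases "y \<in> A")
    case False
    then have "(\<Sum>ys\<in>{ys. length ys = Suc n}.
          if set (y # ys) \<inter> A = {} then path_weight P (y # ys) else 0)
        = (\<Sum>z\<in>UNIV. P y z * (\<Sum>zs\<in>{xs. length xs = n}.
          if set (z # zs) \<inter> A = {} then path_weight P (z # zs) else 0))"
      unfolding sum_lists_length_Suc by (auto simp: sum_distrib_left intro!: sum.cong)
    then show ?thesis using Suc False by simp
  qed (auto intro: sum.neutral)
qed

lemma traj_prob_avoid:
  assumes "N \<ge> 1"
  shows "traj_prob mu P N (\<lambda>xs. set xs \<inter> A = {}) = (\<Sum>y\<in>UNIV. mu y * avoid_prob P A (N - 1) y)"
proof -
  obtain n where N: "N = Suc n" using assms by (cases N) auto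
  have "traj_prob mu P N (\<lambda>xs. set xs \<inter> A = {})
     = (\<Sum>y\<in>UNIV. \<Sum>ys\<in>{xs. length xs = n}.
          if set (y # ys) \<inter> A = {} then mu y * path_weight P (y # ys) else 0)"
    unfolding traj_prob_eq_sum_if N sum_lists_length_Suc path_prob_Cons ..
  also have "\<dots> = (\<Sum>y\<in>UNIV. mu y * (\<Sum>ys\<in>{xs. length xs = n}.
          if set (y # ys) \<inter> A = {} then path_weight P (y # ys) else 0))"
    by (auto simp: sum_distrib_left intro!: sum.cong)
  finally show ?thesis unfolding sum_avoiding_paths N by simp
qed

lemma traj_prob_True:
  assumes "N \<ge> 1" "stochastic P" "(\<Sum>s\<in>UNIV. mu s) = 1"
  shows "traj_prob mu P N (\<lambda>xs. True) = 1"
proof -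
  have "avoid_prob P {} n y = 1" for n y
    using assms(2) by (induction n arbitrary: y) (auto simp: stochastic_row_sum)
  then show ?thesis
    using traj_prob_avoid[OF assms(1), of mu P "{}"] assms(3) by simp
qed

subsection \<open>Avoiding a set of large stationary mass\<close>

lemma avoid_prob_nonneg: "stochastic P \<Longrightarrow> 0 \<le> avoid_prob P A n y"
  by (induction n arbitrary: y) (auto intro!: sum_nonneg simp: stochastic_nonneg)

lemma avoid_prob_le_1: "stochastic P \<Longrightarrow> avoid_prob P A n y \<le> 1"
proof (induction n arbitrary: y)
  case (Suc n)
  have "(\<Sum>z\<in>UNIV. P y z * avoid_prob P A n z) \<le> (\<Sum>z\<in>UNIV. P y z * 1)"
    using Suc by (intro sum_mono mult_left_mono) (auto simp: stochastic_nonneg)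
  then show ?case using stochastic_row_sum[OF Suc.prems, of y] by simp
qed simp

lemma avoid_prob_eq_0: "y \<in> A \<Longrightarrow> avoid_prob P A n y = 0"
  by (cases n) auto

lemma avoid_prob_add_le:
  "stochastic P \<Longrightarrow> avoid_prob P A (L + n) y \<le> (\<Sum>z\<in>UNIV. matpow P L y z * avoid_prob P A n z)"
proof (induction L arbitrary: y)
  case 0
  have "(\<Sum>z\<in>UNIV. matpow P 0 y z * avoid_prob P A n z) = (\<Sum>z\<in>UNIV. if y = z then avoid_prob P A n z else 0)"
    by (rule sum.cong) auto
  then show ?case by simp
next
  case (Suc L)
  have "avoid_prob P A (Suc L + n) y \<le> (\<Sum>z\<in>UNIV. P y z * avoid_prob P A (L + n) z)"
    using Suc.prems by (auto intro!: sum_nonneg simp: avoid_prob_nonneg stochastic_nonneg)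
  also have "\<dots> \<le> (\<Sum>z\<in>UNIV. P y z * (\<Sum>w\<in>UNIV. matpow P L z w * avoid_prob P A n w))"
    using Suc by (intro sum_mono mult_left_mono) (auto simp: stochastic_nonneg)
  also have "\<dots> = (\<Sum>w\<in>UNIV. matpow P (Suc L) y w * avoid_prob P A n w)"
    by (simp only: matpow_Suc_left sum_distrib_left sum_distrib_right mult.assoc, rule sum.swap)
  finally show ?case .
qed

lemma avoid_prob_le_power:
  assumes st: "stochastic P" and hit: "\<And>y. c \<le> trans_prob P L y A"
  shows "avoid_prob P A (k * L + r) y \<le> (1 - c) ^ k"
proof (induction k arbitrary: y)
  case 0
  then show ?case using avoid_prob_le_1[OF st] by simp
next
  case (Suc k)
  define a where "a = (1 - c) ^ k"
  have "c \<le> 1" using hit[of y] trans_prob_le_1[OF st] by (rule order.trans)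
  then have "0 \<le> a" by (simp add: a_def)
  have "avoid_prob P A (Suc k * L + r) y \<le> (\<Sum>z\<in>UNIV. matpow P L y z * avoid_prob P A (k * L + r) z)"
    using avoid_prob_add_le[OF st, of A L "k * L + r" y] by (simp add: add.assoc)
  also have "\<dots> \<le> (\<Sum>z\<in>UNIV. matpow P L y z * (if z \<in> A then 0 else a))"
    using Suc.IH by (intro sum_mono) (auto simp: a_def matpow_nonneg[OF st] mult_left_mono
        avoid_prob_eq_0)
  also have "\<dots> = (\<Sum>z\<in>UNIV. a * matpow P L y z) - (\<Sum>z\<in>UNIV. a * (if z \<in> A then matpow P L y z else 0))"
    unfolding sum_subtractf[symmetric] by (rule sum.cong) auto
  also have "\<dots> = a * (1 - trans_prob P L y A)"
    unfolding sum_distrib_left[symmetric] matpow_row_sum[OF st] trans_prob_def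
    using sum.inter_restrict[of UNIV "matpow P L y" A] by (simp add: right_diff_distrib)
  also have "\<dots> \<le> a * (1 - c)"
    using hit[of y] \<open>0 \<le> a\<close> by (intro mult_left_mono) auto
  finally show ?case by (simp add: a_def mult.commute)
qed

text \<open>The oscillation of t \<mapsto> trans_prob P t y B is at most 1/2 at the mixing time,
  so l mixing times bring every row within (1/2)^l of the stationary mass.\<close>
lemma trans_prob_ge_after_mixing:
  assumes st: "stochastic P" and sd: "stationary_dist P \<rho>"
    and tv: "\<And>s. tv_dist (matpow P \<tau> s) \<rho> \<le> 1/4"
  shows "(\<Sum>z\<in>A. \<rho> z) - (1/2) ^ l \<le> trans_prob P (l * \<tau>) y A"
proof -
  have "trans_prob P \<tau> x B - trans_prob P \<tau> x' B \<le> 1/2" for x x' B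
    using sum_le_tv_dist[where B = B and p = "matpow P \<tau> x" and q = \<rho>]
      sum_le_tv_dist[where B = B and p = "matpow P \<tau> x'" and q = \<rho>]
      tv[of x] tv[of x'] unfolding trans_prob_def by linarith
  then have "\<bar>trans_prob P (l * \<tau>) y A - (\<Sum>z\<in>A. \<rho> z)\<bar> \<le> (1/2) ^ l"
    by (intro trans_prob_stationary_diff_le[OF sd] trans_prob_oscillation_power[OF st]) auto
  then show ?thesis by linarith
qed

lemma traj_prob_avoid_le:
  assumes st: "stochastic P" and sd: "stationary_dist P \<rho>"
    and tv: "\<And>s. tv_dist (matpow P \<tau> s) \<rho> \<le> 1/4"
    and mu: "\<And>s. 0 \<le> mu s" "(\<Sum>s\<in>UNIV. mu s) = 1" and "N \<ge> 1"
    and l: "(1/2) ^ l \<le> x/2" and A: "x < (\<Sum>z\<in>A. \<rho> z)"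
  shows "traj_prob mu P N (\<lambda>xs. set xs \<inter> A = {}) \<le> (1 - x/2) ^ ((N - 1) div (l * \<tau>))"
proof -
  define L where "L = l * \<tau>"
  have "x/2 \<le> trans_prob P L y A" for y
    using trans_prob_ge_after_mixing[OF st sd tv, of A l y] A l unfolding L_def by linarith
  then have "avoid_prob P A (N - 1) y \<le> (1 - x/2) ^ ((N - 1) div L)" for y
    using avoid_prob_le_power[OF st, of "x/2" L A "(N - 1) div L" "(N - 1) mod L" y] by simp
  then have "(\<Sum>y\<in>UNIV. mu y * avoid_prob P A (N - 1) y) \<le> (\<Sum>y\<in>UNIV. mu y * (1 - x/2) ^ ((N - 1) div L))"
    using mu(1) by (intro sum_mono mult_left_mono)
  then show ?thesis
    using mu(2) traj_prob_avoid[OF \<open>N \<ge> 1\<close>, of mu P A]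
    by (simp add: L_def sum_distrib_right[symmetric])
qed

lemma traj_prob_unvisited_mass_gt_le:
  fixes P :: "'s::finite \<Rightarrow> 's \<Rightarrow> real"
  assumes st: "stochastic P" and sd: "stationary_dist P \<rho>"
    and tv: "\<And>s. tv_dist (matpow P \<tau> s) \<rho> \<le> 1/4"
    and mu: "\<And>s. 0 \<le> mu s" "(\<Sum>s\<in>UNIV. mu s) = 1" and "N \<ge> 1"
    and x: "x \<le> 2" and l: "(1/2) ^ l \<le> x/2"
  shows "traj_prob mu P N (\<lambda>xs. x < (\<Sum>s\<in>-set xs. \<rho> s))
    \<le> 2 ^ card (UNIV :: 's set) * (1 - x/2) ^ ((N - 1) div (l * \<tau>))"
proof -
  define \<A> where "\<A> = {A :: 's set. x < (\<Sum>s\<in>A. \<rho> s)}"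
  have "traj_prob mu P N (\<lambda>xs. x < (\<Sum>s\<in>-set xs. \<rho> s))
      \<le> (\<Sum>A\<in>\<A>. traj_prob mu P N (\<lambda>xs. set xs \<inter> A = {}))"
    by (rule traj_prob_union_bound[OF st mu(1)]) (auto simp: \<A>_def intro!: bexI[of _ "- set _"])
  also have "\<dots> \<le> (\<Sum>A\<in>\<A>. (1 - x/2) ^ ((N - 1) div (l * \<tau>)))"
    using traj_prob_avoid_le[OF st sd tv mu \<open>N \<ge> 1\<close> l] by (intro sum_mono) (simp add: \<A>_def)
  also have "\<dots> \<le> 2 ^ card (UNIV :: 's set) * (1 - x/2) ^ ((N - 1) div (l * \<tau>))"
  proof -
    have "card \<A> \<le> card (UNIV :: 's set set)" by (rule card_mono) auto
    also have "\<dots> = 2 ^ card (UNIV :: 's set)"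
      using card_Pow[of "UNIV :: 's set"] by simp
    finally have "real (card \<A>) \<le> 2 ^ card (UNIV :: 's set)"
      by (simp flip: of_nat_le_iff)
    then show ?thesis using x by (simp add: mult_right_mono)
  qed
  finally show ?thesis .
qed

subsection \<open>The concentration bound\<close>

lemma exists_halving_exponent:
  fixes x :: real
  assumes "0 < x" "x < 1"
  shows "\<exists>l\<ge>1. (1/2) ^ l \<le> x/2 \<and> real l * x \<le> 2"
proof -
  obtain n where "2 / x < 2 ^ n" using real_arch_pow[of 2 "2 / x"] by auto
  define l where "l = (LEAST l. 2 \<le> 2 ^ l * x)"
  have l: "2 \<le> 2 ^ l * x"
    unfolding l_def by (rule LeastI[of _ n]) (use \<open>2 / x < 2 ^ n\<close> assms in \<open>simp add: divide_less_eq\<close>)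
  then have "l \<noteq> 0" using assms by (cases l) auto
  then obtain j where j: "l = Suc j" by (cases l) auto
  then have "2 ^ j * x < 2"
    using not_less_Least[of j "\<lambda>l. 2 \<le> 2 ^ l * x"] unfolding l_def by simp
  moreover have "real (Suc j) \<le> 2 ^ j"
    by (induction j) auto
  then have "real l * x \<le> 2 ^ j * x"
    unfolding j using assms by (intro mult_right_mono) auto
  ultimately have "real l * x \<le> 2" by simp
  moreover have "(1/2) ^ l \<le> x/2"
    using l by (simp add: power_one_over field_simps)
  ultimately show ?thesis using j by auto
qed

text \<open>With q = N/\<tau> one has K = \<delta>^2 q/8 and m \<ge> q/l - 1 \<ge> x q/2 - 1, so the
  exponent K - x m/2 is at most (\<delta>^2/8 - (\<epsilon>^2 + \<delta>^2)/4) q + 1/2 \<le> -\<epsilon>^2 q/4.5 + 1/2,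
  and exp(1/2) \<le> 2.\<close>
lemma card_pow_decay_le_exp:
  fixes K \<tau> l m N :: nat and \<epsilon> \<delta> x :: real
  assumes "\<epsilon> > 0" "\<delta> \<ge> 0" and \<delta>: "\<delta> ^ 2 = 8 * K * \<tau> / N" and x: "x = \<epsilon> + \<delta>" "x < 1"
    and "\<tau> \<ge> 1" "N \<ge> 1" and "l \<ge> 1" "l * x \<le> 2" and N_le: "real N \<le> (m + 1) * (l * \<tau>)"
  shows "2 ^ K * (1 - x/2) ^ m \<le> 2 * exp (- (\<epsilon> ^ 2 * N) / (4.5 * \<tau>))"
proof -
  define q where "q = real N / real \<tau>"
  have "q > 0" using assms by (simp add: q_def)
  have "0 < x" using assms by simp
  have "1 - x/2 \<le> exp (- x/2)" using exp_ge_add_one_self[of "- x/2"] by simp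
  then have "2 ^ K * (1 - x/2) ^ m \<le> exp 1 ^ K * exp (- x/2) ^ m"
    using exp_ge_add_one_self[of 1] x(2) by (intro mult_mono power_mono) auto
  also have "\<dots> = exp (real K - x/2 * m)"
    by (simp add: exp_of_nat_mult[symmetric] exp_add[symmetric] exp_diff mult.commute)
  also have "real K - x/2 * m \<le> 1/2 - 2 * (\<epsilon> ^ 2 * q) / 9"
  proof -
    have K: "real K = \<delta> ^ 2 * q / 8" using \<delta> assms by (simp add: q_def field_simps)
    have "q / l - 1 \<le> m"
      using N_le assms by (simp add: q_def field_simps)
    then have "x/2 * (q / l - 1) \<le> x/2 * m" using \<open>0 < x\<close> by (intro mult_left_mono) auto
    then have h1: "x/2 * (q / l) - x/2 \<le> x/2 * m" by (simp add: right_diff_distrib)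
    have "x/2 \<le> 1 / l" using assms by (simp add: field_simps)
    then have "x/2 * (x/2 * q) \<le> x/2 * (q / l)"
      using \<open>0 < x\<close> \<open>q > 0\<close> mult_right_mono[of "x/2" "1 / l" q] by (intro mult_left_mono) auto
    then have h2: "x ^ 2 * q / 4 \<le> x/2 * (q / l)" by (simp add: power2_eq_square)
    have "\<epsilon> ^ 2 + \<delta> ^ 2 \<le> x ^ 2" using x assms by (simp add: power2_eq_square algebra_simps)
    then have h3: "\<epsilon> ^ 2 * q + \<delta> ^ 2 * q \<le> x ^ 2 * q"
      using \<open>q > 0\<close> by (simp add: mult_right_mono flip: distrib_right)
    have "0 \<le> \<epsilon> ^ 2 * q" "0 \<le> \<delta> ^ 2 * q" using \<open>q > 0\<close> by simp_all
    then show ?thesis using K h1 h2 h3 x(2) by linarith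
  qed
  then have "exp (real K - x/2 * m) \<le> exp (1/2) * exp (- (\<epsilon> ^ 2 * N) / (4.5 * \<tau>))"
    by (simp add: exp_add[symmetric] q_def)
  also have "\<dots> \<le> 2 * exp (- (\<epsilon> ^ 2 * N) / (4.5 * \<tau>))"
    using exp_bound_half[of "1/2 :: real"] by (intro mult_right_mono) auto
  finally show ?thesis .
qed

lemma traj_prob_unvisited_mass_gt_le_exp:
  fixes P :: "'s::finite \<Rightarrow> 's \<Rightarrow> real"
  assumes st: "stochastic P" and irr: "irreducible_chain P" and ap: "aperiodic_chain P"
    and sd: "stationary_dist P \<rho>"
    and mu: "\<And>s. 0 \<le> mu s" "(\<Sum>s\<in>UNIV. mu s) = 1" and N: "N \<ge> 1" and "\<epsilon> > 0"
    and \<tau>: "mixing_time P \<rho> \<ge> 1"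
    and x: "x = \<epsilon> + sqrt (8 * real (card (UNIV :: 's set)) * real (mixing_time P \<rho>) / real N)"
      "x < 1"
  shows "traj_prob mu P N (\<lambda>xs. x < (\<Sum>s\<in>-set xs. \<rho> s))
    \<le> 2 * exp (- (\<epsilon> ^ 2 * real N) / (4.5 * real (mixing_time P \<rho>)))"
proof -
  define \<tau> where "\<tau> = mixing_time P \<rho>"
  define K where "K = card (UNIV :: 's set)"
  define \<delta> where "\<delta> = sqrt (8 * real K * real \<tau> / real N)"
  have \<delta>: "\<delta> \<ge> 0" "\<delta> ^ 2 = 8 * K * \<tau> / N" and x_eq: "x = \<epsilon> + \<delta>"
    unfolding \<delta>_def K_def \<tau>_def x by simp_all
  then have "0 < x" using \<open>\<epsilon> > 0\<close> by simp
  obtain l where l: "l \<ge> 1" "(1/2) ^ l \<le> x/2" "real l * x \<le> 2"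
    using exists_halving_exponent[OF \<open>0 < x\<close> \<open>x < 1\<close>] by blast
  define m where "m = (N - 1) div (l * \<tau>)"
  have "N - 1 < (m + 1) * (l * \<tau>)"
    unfolding m_def using l(1) \<tau> by (simp add: \<tau>_def dividend_less_div_times)
  then have "real N \<le> (m + 1) * (l * \<tau>)" using N by (simp flip: of_nat_mult)
  have tv: "tv_dist (matpow P \<tau> s) \<rho> \<le> 1/4" for s
    unfolding \<tau>_def by (rule mixing_time_tv_dist_le[OF st irr ap sd])
  have "traj_prob mu P N (\<lambda>xs. x < (\<Sum>s\<in>-set xs. \<rho> s)) \<le> 2 ^ K * (1 - x/2) ^ m"
    unfolding K_def m_def
    using traj_prob_unvisited_mass_gt_le[OF st sd tv mu N _ l(2)] \<open>0 < x\<close> \<open>x < 1\<close> by simp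
  also have "\<dots> \<le> 2 * exp (- (\<epsilon> ^ 2 * N) / (4.5 * \<tau>))"
    by (rule card_pow_decay_le_exp)
      (use \<open>\<epsilon> > 0\<close> \<tau> N l \<delta> x_eq \<open>x < 1\<close> \<open>real N \<le> _\<close> in \<open>auto simp: \<tau>_def\<close>)
  finally show ?thesis unfolding \<tau>_def .
qed

lemma unvisited_mass_concentration:
  fixes P :: "'s::finite \<Rightarrow> 's \<Rightarrow> real"
  assumes st: "stochastic P" and irr: "irreducible_chain P" and ap: "aperiodic_chain P"
    and sd: "stationary_dist P \<rho>"
    and mu: "\<And>s. 0 \<le> mu s" "(\<Sum>s\<in>UNIV. mu s) = 1" and N: "N \<ge> 1" and "\<epsilon> > 0"
  shows "traj_prob mu P N (\<lambda>xs. (\<Sum>s\<in>-set xs. \<rho> s)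
      \<le> \<epsilon> + sqrt (8 * real (card (UNIV :: 's set)) * real (mixing_time P \<rho>) / real N))
    \<ge> 1 - 2 * exp (- (\<epsilon> ^ 2 * real N) / (4.5 * real (mixing_time P \<rho>)))"
    (is "traj_prob mu P N (\<lambda>xs. _ \<le> ?x) \<ge> _")
proof -
  have total: "traj_prob mu P N (\<lambda>xs. True) = 1" by (rule traj_prob_True[OF N st mu(2)])
  consider "mixing_time P \<rho> = 0" | "?x \<ge> 1" | "mixing_time P \<rho> \<ge> 1" "?x < 1" by linarith
  then show ?thesis
  proof cases
    case 1 \<comment> \<open>since x / 0 = 0 the exponent vanishes and the bound is 1 - 2\<close>
    have "0 \<le> traj_prob mu P N (\<lambda>xs. (\<Sum>s\<in>-set xs. \<rho> s) \<le> ?x)"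
      by (rule traj_prob_nonneg[of P mu, OF st mu(1)])
    with 1 show ?thesis by simp
  next
    case 2
    have "\<And>s. 0 \<le> \<rho> s" "(\<Sum>s\<in>UNIV. \<rho> s) = 1"
      using sd unfolding stationary_dist_def by blast+
    then have "(\<Sum>s\<in>-set xs. \<rho> s) \<le> ?x" for xs
      using sum_mono2[of UNIV "- set xs" \<rho>] 2 by simp
    then show ?thesis
      using traj_prob_mono[of P mu, OF st mu(1), of "\<lambda>xs. True" _ N] total by simp
  next
    case 3
    then show ?thesis
      using traj_prob_unvisited_mass_gt_le_exp[OF assms 3(1) refl 3(2)] total
        traj_prob_not[of mu P N "\<lambda>xs. ?x < (\<Sum>s\<in>-set xs. \<rho> s)"]
      by (simp add: not_less)
  qed
qed

subsection \<open>Deterministic expert and intrinsic reward\<close>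

lemma induced_chain_det_policy: "induced_chain T (det_policy d) s s' = T s (d s) s'"
proof -
  have "induced_chain T (det_policy d) s s' = (\<Sum>a\<in>UNIV. if a = d s then T s a s' else 0)"
    unfolding induced_chain_def det_policy_def by (rule sum.cong) auto
  then show ?thesis by simp
qed

lemma stochastic_induced_chain_det_policy: "mdp_kernel T \<Longrightarrow> stochastic (induced_chain T (det_policy d))"
  unfolding stochastic_def induced_chain_det_policy mdp_kernel_def by blast

lemma expect_det_policy_R_int_dataset:
  fixes \<rho> :: "'s::finite \<Rightarrow> real" and d :: "'s \<Rightarrow> 'a::finite"
  shows "expect_sa (sa_dist \<rho> (det_policy d)) (R_int (dataset d xs)) = (\<Sum>s\<in>set xs. \<rho> s)"
proof -
  have "(\<Sum>a\<in>UNIV. sa_dist \<rho> (det_policy d) (s, a) * R_int (dataset d xs) (s, a))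
      = (if s \<in> set xs then \<rho> s else 0)" for s
  proof -
    have "(\<Sum>a\<in>UNIV. sa_dist \<rho> (det_policy d) (s, a) * R_int (dataset d xs) (s, a))
        = (\<Sum>a\<in>UNIV. if a = d s then \<rho> s * R_int (dataset d xs) (s, d s) else 0)"
      by (rule sum.cong) (auto simp: sa_dist_def det_policy_def)
    then show ?thesis by (simp add: R_int_def dataset_def)
  qed
  moreover have "expect_sa (sa_dist \<rho> (det_policy d)) (R_int (dataset d xs))
      = (\<Sum>s\<in>UNIV. \<Sum>a\<in>UNIV. sa_dist \<rho> (det_policy d) (s, a) * R_int (dataset d xs) (s, a))"
    unfolding expect_sa_def by (simp add: sum.cartesian_product flip: UNIV_Times_UNIV)
  ultimately show ?thesis using sum.inter_restrict[of UNIV \<rho> "set xs"] by simp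
qed

lemma sum_eq_1_minus_sum_Compl:
  fixes \<rho> :: "'s::finite \<Rightarrow> real"
  shows "(\<Sum>s\<in>UNIV. \<rho> s) = 1 \<Longrightarrow> (\<Sum>s\<in>B. \<rho> s) = 1 - (\<Sum>s\<in>-B. \<rho> s)"
  using sum.subset_diff[of B UNIV \<rho>] by (simp add: Compl_eq_Diff_UNIV)

theorem lemma5:
  fixes T :: "'s::finite \<Rightarrow> 'a::finite \<Rightarrow> 's \<Rightarrow> real"
    and piE :: "'s \<Rightarrow> 'a"
    and \<rho>ES :: "'s \<Rightarrow> real"
    and mu :: "'s \<Rightarrow> real"
    and N :: nat and \<epsilon> :: real
  assumes "mdp_kernel T"
    and "irreducible_chain (induced_chain T (det_policy piE))"
    and "aperiodic_chain (induced_chain T (det_policy piE))"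
    and "stationary_dist (induced_chain T (det_policy piE)) \<rho>ES"
    and "\<forall>s. 0 \<le> mu s" and "(\<Sum>s\<in>UNIV. mu s) = 1"
    and "N \<ge> 1"
    and "\<epsilon> > 0"
  shows "traj_prob mu (induced_chain T (det_policy piE)) N
     (\<lambda>xs. let D = dataset piE xs;
              \<tau> = mixing_time (induced_chain T (det_policy piE)) \<rho>ES;
              bnd = 1 - \<epsilon> - sqrt (8 * real (card (UNIV :: 's set)) * real \<tau> / real N)
          in expect_sa (sa_dist \<rho>ES (det_policy piE)) (R_int D) \<ge> bnd \<and>
             (\<forall>piI \<rho>IS. is_policy piI
                 \<longrightarrow> irreducible_chain (induced_chain T piI)
                 \<longrightarrow> aperiodic_chain (induced_chain T piI)
                 \<longrightarrow> stationary_dist (induced_chain T piI) \<rho>IS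
                 \<longrightarrow> expect_sa (sa_dist \<rho>IS piI) (R_int D)
                       \<ge> expect_sa (sa_dist \<rho>ES (det_policy piE)) (R_int D)
                 \<longrightarrow> expect_sa (sa_dist \<rho>IS piI) (R_int D) \<ge> bnd))
   \<ge> 1 - 2 * exp (- (\<epsilon>^2 * real N) / (4.5 * real (mixing_time (induced_chain T (det_policy piE)) \<rho>ES)))"
proof -
  let ?P = "induced_chain T (det_policy piE)"
  have st: "stochastic ?P" by (rule stochastic_induced_chain_det_policy[OF assms(1)])
  have "(\<Sum>s\<in>UNIV. \<rho>ES s) = 1" using assms(4) unfolding stationary_dist_def by blast
  then have expert_reward: "expect_sa (sa_dist \<rho>ES (det_policy piE)) (R_int (dataset piE xs))
      = 1 - (\<Sum>s\<in>-set xs. \<rho>ES s)" for xs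
    unfolding expect_det_policy_R_int_dataset by (rule sum_eq_1_minus_sum_Compl)
  have mu: "\<And>s. 0 \<le> mu s" using assms(5) by blast
  show ?thesis
    by (rule order.trans[OF unvisited_mass_concentration[OF st assms(2-4) mu assms(6-8)]],
        rule traj_prob_mono[of ?P mu, OF st mu], unfold Let_def expert_reward,
        intro conjI allI impI; linarith)
qed

end
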